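(* For every integer $k\ge1$, $2d(\{0,1,\ldots,k-1\})\ge d(\{0,1,\ldots,k\})$, and the inequality is strict for $k>1$.
   Context: For $A,B\subseteq\mathbb{N}=\{0,1,\ldots\}$, $A+B=\{a+b:a\in A,b\in B\}$. For a nonempty finite $C\subseteq\mathbb{N}$, $d(C)$ is the number of sets $B\subseteq\mathbb{N}$ such that $B+D=C$ for some $D\subseteq\mathbb{N}$. *)

theory Defs
  imports Main
begin

definition sumset :: "nat set \<Rightarrow> nat set \<Rightarrow> nat set" where
  "sumset A B = {a + b | a b. a \<in> A \<and> b \<in> B}"

definition num_summands :: "nat set \<Rightarrow> nat" where
  "num_summands C = card {B. \<exists>D. sumset B D = C}"

end

theory Submission
  imports Defs
begin

text \<open>Lowering the maximum of a summand \<open>B\<close> of \<open>[0, n+1]\<close> by one gives a summand of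
  \<open>[0, n]\<close>, and together with one bit (whether \<open>Max B - 1\<close> was already in \<open>B\<close>) it determines
  \<open>B\<close>; hence \<open>d([0, n+1]) \<le> 2 d([0, n])\<close>. For \<open>n \<ge> 1\<close> the pair \<open>([0, n], False)\<close> is never
  attained: it could only come from \<open>B = [0, n+1] - {n}\<close>, and a summand containing \<open>n+1\<close>
  forces \<open>D = {0}\<close>, so it would have to contain \<open>n\<close> itself.\<close>

definition summands :: "nat set \<Rightarrow> nat set set" where
  "summands C = {B. \<exists>D. sumset B D = C}"

lemma num_summands_eq_card: "num_summands C = card (summands C)"
  by (simp add: num_summands_def summands_def)

lemma sumset_mono: "B \<subseteq> B' \<Longrightarrow> D \<subseteq> D' \<Longrightarrow> sumset B D \<subseteq> sumset B' D'"
  unfolding sumset_def by blast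

lemma summand_of_interval:
  assumes "sumset B D = {0..n}"
  shows "0 \<in> B" "B \<subseteq> {0..n}" "finite B" "Max B \<le> n"
    and "sumset B {0..n - Max B} = {0..n}"
proof -
  have "0 \<in> sumset B D" using assms by simp
  then have "0 \<in> B" "0 \<in> D" unfolding sumset_def by auto
  then show "0 \<in> B" by simp
  have sum_le: "b + d \<le> n" if "b \<in> B" "d \<in> D" for b d
  proof -
    have "b + d \<in> sumset B D" using that unfolding sumset_def by blast
    then show ?thesis using assms by simp
  qed
  show "B \<subseteq> {0..n}" using sum_le[OF _ \<open>0 \<in> D\<close>] by auto
  then show "finite B" using finite_subset by blast
  then have "Max B \<in> B" using \<open>0 \<in> B\<close> by (intro Max_in) auto
  then show "Max B \<le> n" using \<open>B \<subseteq> {0..n}\<close> by auto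
  have "D \<subseteq> {0..n - Max B}" using sum_le[OF \<open>Max B \<in> B\<close>] by fastforce
  then have "{0..n} \<subseteq> sumset B {0..n - Max B}"
    using assms sumset_mono[of B B D] by blast
  moreover have "b + d \<le> n" if "b \<in> B" "d \<le> n - Max B" for b d
    using Max_ge[OF \<open>finite B\<close> \<open>b \<in> B\<close>] \<open>Max B \<le> n\<close> that(2) by linarith
  then have "sumset B {0..n - Max B} \<subseteq> {0..n}" unfolding sumset_def by auto
  ultimately show "sumset B {0..n - Max B} = {0..n}" by blast
qed

lemma Max_eq_0_imp_singleton:
  fixes B :: "nat set"
  assumes "finite B" "0 \<in> B" "Max B = 0"
  shows "B = {0}"
  using assms Max_ge by fastforce

lemma finite_summands_interval: "finite (summands {0..n})"
proof (rule finite_subset)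
  show "summands {0..n} \<subseteq> Pow {0..n}"
    unfolding summands_def using summand_of_interval(2) by blast
qed simp

lemma interval_mem_summands: "{0..n} \<in> summands {0..n}"
proof -
  have "sumset {0..n} {0} = {0..n}" unfolding sumset_def by auto
  then show ?thesis unfolding summands_def by blast
qed

lemma summand_top_imp_pred_top:
  assumes "sumset B D = {0..Suc n}" and "Suc n \<in> B"
  shows "n \<in> B"
proof -
  have "D \<subseteq> {0}"
  proof
    fix d assume "d \<in> D"
    then have "Suc n + d \<in> {0..Suc n}"
      using assms unfolding sumset_def by blast
    then show "d \<in> {0}" by simp
  qed
  moreover have "n \<in> sumset B D" using assms(1) by simp
  ultimately show "n \<in> B" unfolding sumset_def by auto
qed

definition lower_max :: "nat set \<Rightarrow> nat set" where
  "lower_max B = insert (Max B - 1) (B - {Max B})"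

text \<open>The flag is phrased via \<open>Suc\<close> so that it is \<open>False\<close> for \<open>B = {0}\<close>, where \<open>Max B - 1\<close>
  truncates to \<open>0\<close>; this keeps \<open>{0}\<close> and \<open>{0, 1}\<close> apart.\<close>
definition lower_summand :: "nat set \<Rightarrow> nat set \<times> bool" where
  "lower_summand B = (lower_max B, Max B \<in> Suc ` B)"

definition raise_summand :: "nat set \<times> bool \<Rightarrow> nat set" where
  "raise_summand = (\<lambda>(B, pred_in).
     if pred_in then insert (Suc (Max B)) B
     else if B = {0} then {0} else insert (Suc (Max B)) (B - {Max B}))"

lemma Max_lower_max:
  assumes "finite B" "B \<noteq> {}"
  shows "Max (lower_max B) = Max B - 1"
proof (rule Max_eqI)
  show "b \<le> Max B - 1" if "b \<in> lower_max B" for b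
  proof -
    have "b \<in> B \<Longrightarrow> b \<noteq> Max B \<Longrightarrow> b < Max B" using assms by (simp add: order_neq_le_trans)
    then show ?thesis using that unfolding lower_max_def by auto
  qed
qed (use assms in \<open>auto simp: lower_max_def\<close>)

lemma lower_max_mem_summands:
  assumes "B \<in> summands {0..Suc n}"
  shows "lower_max B \<in> summands {0..n}"
proof -
  obtain D where "sumset B D = {0..Suc n}" using assms unfolding summands_def by blast
  note B = summand_of_interval[OF this]
  show ?thesis
  proof (cases "Max B")
    case 0
    then have "B = {0}" using B(1,3) by (intro Max_eq_0_imp_singleton)
    moreover have "sumset {0} {0..n} = {0..n}" unfolding sumset_def by auto
    ultimately show ?thesis by (auto simp: lower_max_def summands_def)
  next
    case (Suc p)
    define c where "c = Suc n - Max B"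
    have n_eq: "n = p + c" using B(4) Suc c_def by simp
    have "Max (lower_max B) = p" using Max_lower_max[of B] B(1,3) Suc by force
    moreover have "finite (lower_max B)" using B(3) by (simp add: lower_max_def)
    ultimately have below_p: "b \<le> p" if "b \<in> lower_max B" for b
      using that Max_ge by metis
    have "sumset (lower_max B) {0..c} = {0..n}"
    proof
      show "sumset (lower_max B) {0..c} \<subseteq> {0..n}"
        using below_p n_eq unfolding sumset_def by fastforce
      show "{0..n} \<subseteq> sumset (lower_max B) {0..c}"
      proof
        fix y assume "y \<in> {0..n}"
        then have "y \<in> sumset B {0..c}" using B(5) c_def by auto
        then obtain b d where bd: "b \<in> B" "d \<le> c" "y = b + d" unfolding sumset_def by auto
        show "y \<in> sumset (lower_max B) {0..c}"
        proof (cases "b = Max B")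
          case True
          then have "y = p + Suc d" and "Suc d \<le> c" using bd Suc \<open>y \<in> {0..n}\<close> n_eq by auto
          moreover have "p \<in> lower_max B" using Suc by (simp add: lower_max_def)
          ultimately show ?thesis unfolding sumset_def by fastforce
        next
          case False
          then have "b \<in> lower_max B" using bd by (simp add: lower_max_def)
          then show ?thesis using bd unfolding sumset_def by auto
        qed
      qed
    qed
    then show ?thesis unfolding summands_def by blast
  qed
qed

lemma raise_lower_summand:
  assumes "finite B" "0 \<in> B"
  shows "raise_summand (lower_summand B) = B"
proof (cases "Max B")
  case 0
  then have "B = {0}" using assms by (intro Max_eq_0_imp_singleton)
  then show ?thesis by (simp add: raise_summand_def lower_summand_def lower_max_def)
next
  case (Suc p)
  have max_in: "Suc p \<in> B" using assms Suc by (metis Max_in empty_iff)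
  have Max_lower: "Max (lower_max B) = p" using Max_lower_max[of B] assms Suc by auto
  show ?thesis
  proof (cases "p \<in> B")
    case True
    then show ?thesis using max_in Suc Max_lower
      by (auto simp: raise_summand_def lower_summand_def lower_max_def)
  next
    case False
    then have "p \<noteq> 0" using assms(2) by metis
    then have "lower_max B \<noteq> {0}" using Suc by (auto simp: lower_max_def)
    then show ?thesis using False max_in Suc Max_lower
      by (auto simp: raise_summand_def lower_summand_def lower_max_def)
  qed
qed

lemma inj_on_lower_summand: "inj_on lower_summand (summands {0..n})"
proof (rule inj_on_inverseI)
  fix B assume "B \<in> summands {0..n}"
  then show "raise_summand (lower_summand B) = B"
    using summand_of_interval(1,3) raise_lower_summand unfolding summands_def by blast
qed

lemma lower_summand_image_subset:
  "lower_summand ` summands {0..Suc n} \<subseteq> summands {0..n} \<times> UNIV"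
  using lower_max_mem_summands by (auto simp: lower_summand_def)

lemma lower_summand_ne_interval:
  assumes "n \<ge> 1" and "B \<in> summands {0..Suc n}"
  shows "lower_summand B \<noteq> ({0..n}, False)"
proof
  assume lower: "lower_summand B = ({0..n}, False)"
  obtain D where D: "sumset B D = {0..Suc n}" using assms(2) unfolding summands_def by blast
  note B = summand_of_interval[OF D]
  have "Max B - 1 = Max (lower_max B)" using Max_lower_max[of B] B(1,3) by force
  also have "\<dots> = Max {0..n}" using lower by (simp add: lower_summand_def)
  also have "\<dots> = n" by (rule Max_eqI) auto
  finally have "Max B - 1 = n" .
  then have "Max B = Suc n" using assms(1) by simp
  then have "Suc n \<in> B" using B(1,3) by (metis Max_in empty_iff)
  then have "n \<in> B" using summand_top_imp_pred_top[OF D] by blast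
  then show False using lower \<open>Max B = Suc n\<close> by (simp add: lower_summand_def)
qed

lemma card_summands_Suc_eq:
  "card (summands {0..Suc n}) = card (lower_summand ` summands {0..Suc n})"
  using inj_on_lower_summand by (simp add: card_image)

lemma card_summands_Suc_le: "card (summands {0..Suc n}) \<le> 2 * card (summands {0..n})"
proof -
  have "card (lower_summand ` summands {0..Suc n}) \<le> card (summands {0..n} \<times> (UNIV :: bool set))"
    using lower_summand_image_subset finite_summands_interval by (intro card_mono) auto
  then show ?thesis using card_summands_Suc_eq by (simp add: card_cartesian_product)
qed

lemma card_summands_Suc_less:
  assumes "n \<ge> 1"
  shows "card (summands {0..Suc n}) < 2 * card (summands {0..n})"
proof -
  have "({0..n}, False) \<in> summands {0..n} \<times> (UNIV :: bool set)"
    using interval_mem_summands by simp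
  moreover have "({0..n}, False) \<notin> lower_summand ` summands {0..Suc n}"
    using lower_summand_ne_interval[OF assms] by (metis imageE)
  ultimately have "lower_summand ` summands {0..Suc n} \<subset> summands {0..n} \<times> (UNIV :: bool set)"
    using lower_summand_image_subset by blast
  then have "card (lower_summand ` summands {0..Suc n}) < card (summands {0..n} \<times> (UNIV :: bool set))"
    using finite_summands_interval by (intro psubset_card_mono) auto
  then show ?thesis using card_summands_Suc_eq by (simp add: card_cartesian_product)
qed

theorem mainTheorem7:
  fixes k :: nat
  assumes "k \<ge> 1"
  shows "2 * num_summands {0..<k} \<ge> num_summands {0..k}
         \<and> (k > 1 \<longrightarrow> 2 * num_summands {0..<k} > num_summands {0..k})"
proof -
  obtain n where k: "k = Suc n" using assms by (cases k) auto
  then have "{0..<k} = {0..n}" by auto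
  then show ?thesis
    unfolding num_summands_eq_card k
    using card_summands_Suc_le card_summands_Suc_less by simp
qed

end
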